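(* Let $d\in\{2,3\}$, let $k^1,\dots,k^d$ be $d$ linearly independent elements of $\mathbb{Z}^d_0$ and let $K=\{k^1,\dots,k^d\}\cup\{-k^1,\dots,-k^d\}$. For $k\in\mathbb{Z}^d_0$, $i\in\{1,\dots,d-1\}$, define the vector field on $\mathbb{T}^d\times\mathbb{S}^{d-1}$ \[ Y_{k,i}(x,v)=\begin{pmatrix}e_k(x)\gamma_k^i\\ (k\cdot v)\,e_{-k}(x)\,\Pi_v\gamma_k^i\end{pmatrix}\in T_x\mathbb{T}^d\times T_v\mathbb{S}^{d-1}. \] Then at each $(x,v)\in\mathbb{T}^d\times\mathbb{S}^{d-1}$, \[ \operatorname{Span}\{Y_{k,i}(x,v):k\in K,\ i=1,\dots,d-1\}=T_x\mathbb{T}^d\times T_v\mathbb{S}^{d-1}. \]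
   Context: $\mathbb{T}^d=[0,2\pi]^d$ periodic; $\mathbb{Z}^d_+=\{k: k_d>0\}\cup\{k: k_1>0,k_d=0\}$, $\mathbb{Z}^d_-=-\mathbb{Z}^d_+$, $\mathbb{Z}^d_0=\mathbb{Z}^d\setminus\{0\}$; $e_k(x)=\sin(k\cdot x)$ for $k\in\mathbb{Z}^d_+$ and $\cos(k\cdot x)$ for $k\in\mathbb{Z}^d_-$. For each $k\in\mathbb{Z}^d_0$, $\gamma_k$ is a $d\times(d-1)$ matrix with columns $\gamma_k^1,\dots,\gamma_k^{d-1}$, satisfying $\gamma_k^\top k=0$, $\gamma_k^\top\gamma_k=\mathrm{Id}$, $\gamma_{-k}=-\gamma_k$. For $v\in\mathbb{S}^{d-1}$, $\Pi_v=\mathrm{Id}-v\otimes v$ is the orthogonal projection onto $T_v\mathbb{S}^{d-1}=v^\perp$. (These $Y_{k,i}$ are the Lie brackets $[e_k\gamma_k^i,V]$ of the noise directions with the drift $V$ of the $(x,v)$ equations $\dot x=u(x)$, $\dot v=\Pi_v\nabla u(x)v$.) *)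

theory Defs
  imports "HOL-Analysis.Analysis"
begin

text \<open>Integer lattice points as int^'n; coordinates ordered by the linear order on 'n,
  so k_1 = k $ (Min UNIV) and k_d = k $ (Max UNIV).\<close>

definition rvec :: "int^'n \<Rightarrow> real^'n" where
  "rvec k = (\<chi> i. real_of_int (k $ i))"

definition Zplus :: "(int^('n::{finite,linorder})) set" where
  "Zplus = {k. k $ Max UNIV > 0}
         \<union> {k. k $ Min UNIV > 0 \<and> k $ Max UNIV = 0}
         \<union> {k. k $ Min UNIV = 0 \<and> k $ Max UNIV = 0 \<and>
               (\<exists>i. k $ i > 0 \<and> (\<forall>j<i. k $ j = 0))}"

definition Zminus :: "(int^('n::{finite,linorder})) set" where
  "Zminus = uminus ` Zplus"

definition Zzero :: "(int^'n::finite) set" where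
  "Zzero = UNIV - {0}"

definition ek :: "int^('n::{finite,linorder}) \<Rightarrow> real^('n::{finite,linorder}) \<Rightarrow> real" where
  "ek k x = (if k \<in> Zplus then sin (rvec k \<bullet> x) else cos (rvec k \<bullet> x))"

definition Proj :: "real^'n \<Rightarrow> real^'n \<Rightarrow> real^'n" where
  "Proj v w = w - (v \<bullet> w) *\<^sub>R v"

definition dimof :: "('a, 'n::finite) vec \<Rightarrow> nat" where
  "dimof k = CARD('n)"

text \<open>gamma k i is the i-th column (i = 1..d-1) of the matrix gamma_k.\<close>
definition admissible_gamma :: "(int^('n::{finite,linorder}) \<Rightarrow> nat \<Rightarrow> real^('n::{finite,linorder})) \<Rightarrow> bool" where
  "admissible_gamma \<gamma> \<longleftrightarrow>
     (\<forall>k\<in>Zzero. (\<forall>i\<in>{1..<dimof k}. \<gamma> k i \<bullet> rvec k = 0)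
        \<and> (\<forall>i\<in>{1..<dimof k}. \<forall>j\<in>{1..<dimof k}. \<gamma> k i \<bullet> \<gamma> k j = (if i = j then 1 else 0))
        \<and> (\<forall>i\<in>{1..<dimof k}. \<gamma> (-k) i = - \<gamma> k i))"

definition Yfield :: "(int^('n::{finite,linorder}) \<Rightarrow> nat \<Rightarrow> real^('n::{finite,linorder})) \<Rightarrow> int^('n::{finite,linorder}) \<Rightarrow> nat
    \<Rightarrow> real^('n::{finite,linorder}) \<Rightarrow> real^('n::{finite,linorder}) \<Rightarrow> (real^('n::{finite,linorder})) \<times> (real^('n::{finite,linorder}))" where
  "Yfield \<gamma> k i x v =
     (ek k x *\<^sub>R \<gamma> k i,
      ((rvec k \<bullet> v) * ek (-k) x) *\<^sub>R Proj v (\<gamma> k i))"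

end

(* For k in K the fields Y_{k,i} and Y_{-k,i} have the shape (a g, b h) and (-b g, a h) with
   a = e_k(x), b = e_{-k}(x), a^2 + b^2 = 1, g = gamma_k^i and h = (k.v) Pi_v gamma_k^i, so a
   rotation separates the components: the span contains every (gamma_k^i, 0) and
   (0, (k.v) Pi_v gamma_k^i).  The gamma_k^i span the hyperplane orthogonal to k, and the
   hyperplanes of two non-parallel k^j together span R^d, which gives the first factor.  Since
   the k^j form a basis, some k^j is not orthogonal to v, and then Pi_v maps the hyperplane
   orthogonal to k^j onto the tangent space v^perp, which gives the second factor. *)
theory Submission
  imports Defs
begin

lemma rvec_uminus: "rvec (- k) = - rvec k"
  by (simp add: rvec_def vec_eq_iff)

lemma rvec_eq_0_iff: "rvec k = 0 \<longleftrightarrow> k = 0"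
  by (simp add: rvec_def vec_eq_iff)

lemma uminus_Zplus_iff:
  fixes k :: "int^('n::{finite,linorder})"
  assumes "k \<noteq> 0"
  shows "- k \<in> Zplus \<longleftrightarrow> k \<notin> Zplus"
proof -
  define i0 where "i0 = Min {i. k $ i \<noteq> 0}"
  have "{i. k $ i \<noteq> 0} \<noteq> {}"
    using assms by (auto simp: vec_eq_iff)
  then have i0: "k $ i0 \<noteq> 0"
    unfolding i0_def using Min_in[of "{i. k $ i \<noteq> 0}"] by auto
  have below_i0: "k $ j = 0" if "j < i0" for j
    using that Min_le[of "{i. k $ i \<noteq> 0}"] unfolding i0_def by (metis (mono_tags) finite mem_Collect_eq not_le)
  have first_nonzero: "(\<forall>j<i. k $ j = 0) \<longleftrightarrow> i = i0" if "k $ i \<noteq> 0" for i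
    using that i0 below_i0 by (metis less_irrefl neq_iff)
  have "(\<exists>i. k $ i > 0 \<and> (\<forall>j<i. k $ j = 0)) \<longleftrightarrow> k $ i0 > 0"
    using first_nonzero by (metis less_irrefl)
  moreover have "(\<exists>i. (- k) $ i > 0 \<and> (\<forall>j<i. (- k) $ j = 0)) \<longleftrightarrow> k $ i0 < 0"
    using first_nonzero by (simp, metis less_irrefl)
  ultimately show ?thesis
    unfolding Zplus_def using i0 by auto
qed

lemma ek_power2_add_ek_uminus_power2:
  fixes k :: "int^('n::{finite,linorder})"
  assumes "k \<noteq> 0"
  shows "(ek k x)\<^sup>2 + (ek (- k) x)\<^sup>2 = 1"
  using uminus_Zplus_iff[OF assms] by (cases "k \<in> Zplus") (simp_all add: ek_def rvec_uminus)

lemma linear_Proj: "linear (Proj v)"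
  by (rule linearI) (simp_all add: Proj_def inner_add_right algebra_simps)

lemma Proj_uminus: "Proj v (- w) = - Proj v w"
  by (simp add: Proj_def)

lemma inner_Proj_self:
  assumes "v \<bullet> v = 1"
  shows "Proj v w \<bullet> v = 0"
  using assms by (simp add: Proj_def inner_diff_left inner_commute[of w v])

lemma hyperplane_subset_Proj_image:
  assumes "v \<bullet> v = 1" and "r \<bullet> v \<noteq> 0"
  shows "{w. w \<bullet> v = 0} \<subseteq> Proj v ` {u. u \<bullet> r = 0}"
proof
  fix w assume "w \<in> {w. w \<bullet> v = 0}"
  then have wv: "w \<bullet> v = 0" by simp
  define u where "u = w - ((w \<bullet> r) / (r \<bullet> v)) *\<^sub>R v"
  have "u \<bullet> r = 0"
    using assms(2) by (simp add: u_def inner_diff_left inner_commute[of v r])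
  moreover have "Proj v u = w"
    using assms(1) wv by (simp add: u_def Proj_def inner_diff_right algebra_simps inner_commute)
  ultimately show "w \<in> Proj v ` {u. u \<bullet> r = 0}" by force
qed

lemma span_orthogonal_family_eq_hyperplane:
  fixes r :: "'a::euclidean_space"
  assumes "r \<noteq> 0" and "pairwise orthogonal G" and "0 \<notin> G"
    and "\<forall>g\<in>G. g \<bullet> r = 0" and "card G = DIM('a) - 1"
  shows "span G = {u. u \<bullet> r = 0}"
proof (rule subspace_dim_equal)
  show "span G \<subseteq> {u. u \<bullet> r = 0}"
    using assms(4) by (intro span_minimal) (auto simp: subspace_hyperplane2)
  have "independent G"
    using assms(2,3) by (rule pairwise_orthogonal_independent)
  then show "dim {u. u \<bullet> r = 0} \<le> dim (span G)"
    using dim_hyperplane[OF assms(1)] assms(5) by (simp add: inner_commute dim_eq_card_independent)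
qed (simp_all add: subspace_hyperplane2)

lemma orthogonal_to_hyperplane_in_span:
  fixes r w :: "'a::real_inner"
  assumes "\<forall>u. u \<bullet> r = 0 \<longrightarrow> w \<bullet> u = 0"
  shows "w \<in> span {r}"
proof (cases "r = 0")
  case True
  then show ?thesis
    using assms by simp
next
  case False
  define c where "c = (w \<bullet> r) / (r \<bullet> r)"
  have "(w - c *\<^sub>R r) \<bullet> r = 0"
    using False by (simp add: c_def inner_diff_left)
  moreover have "w \<bullet> (w - c *\<^sub>R r) = 0"
    using assms calculation by blast
  ultimately have "(w - c *\<^sub>R r) \<bullet> (w - c *\<^sub>R r) = 0"
    by (simp add: inner_diff_left inner_commute)
  then have "w = c *\<^sub>R r" by simp
  then show ?thesis
    by (simp add: span_base span_scale)
qed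

text \<open>A vector orthogonal to both hyperplanes would lie on both lines spanned by
  \<open>r\<^sub>1\<close> and \<open>r\<^sub>2\<close>.\<close>
lemma span_Un_eq_UNIV_if_hyperplanes:
  fixes r1 r2 :: "'a::euclidean_space"
  assumes "r1 \<notin> span {r2}"
    and "{u. u \<bullet> r1 = 0} \<subseteq> span G1" and "{u. u \<bullet> r2 = 0} \<subseteq> span G2"
  shows "span (G1 \<union> G2) = UNIV"
proof (rule ccontr)
  assume "span (G1 \<union> G2) \<noteq> UNIV"
  then have "dim (G1 \<union> G2) < DIM('a)"
    using dim_eq_full[of "G1 \<union> G2"] dim_subset_UNIV[of "G1 \<union> G2"] by force
  then obtain w :: 'a where "w \<noteq> 0" and w_orth: "\<And>y. y \<in> span (G1 \<union> G2) \<Longrightarrow> orthogonal w y"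
    using orthogonal_to_subspace_exists by blast
  have "w \<in> span {r}" if "{u. u \<bullet> r = 0} \<subseteq> span G" and "G \<subseteq> G1 \<union> G2" for r G
  proof (rule orthogonal_to_hyperplane_in_span, intro allI impI)
    fix u assume "u \<bullet> r = 0"
    then have "u \<in> span (G1 \<union> G2)"
      using that span_mono by blast
    then show "w \<bullet> u = 0"
      using w_orth orthogonal_def by blast
  qed
  then have "w \<in> span {r1}" and "w \<in> span {r2}"
    using assms(2,3) by auto
  then obtain c where "w = c *\<^sub>R r1"
    by (auto simp: span_singleton)
  moreover have "c \<noteq> 0"
    using \<open>w \<noteq> 0\<close> calculation by auto
  ultimately have "r1 = (1 / c) *\<^sub>R w" by simp
  then show False
    using assms(1) \<open>w \<in> span {r2}\<close> by (simp add: span_scale)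
qed

lemma exists_inner_nonzero_if_independent_image:
  fixes f :: "'b \<Rightarrow> 'a::euclidean_space"
  assumes "independent (f ` A)" and "inj_on f A" and "card A = DIM('a)" and "v \<noteq> 0"
  shows "\<exists>j\<in>A. f j \<bullet> v \<noteq> 0"
proof (rule ccontr)
  assume none: "\<not> ?thesis"
  have "v \<in> span (f ` A)"
    using card_ge_dim_independent[of "f ` A" UNIV] assms(1-3) by (auto simp: card_image)
  then have "orthogonal v v"
    by (rule orthogonal_to_span) (use none in \<open>auto simp: orthogonal_def inner_commute\<close>)
  then show False
    using assms(4) by (simp add: orthogonal_def)
qed

lemma linear_image_span_subset:
  assumes "linear f" and "f ` G \<subseteq> span S"
  shows "f ` span G \<subseteq> span S"
  using assms span_mono span_span by (metis span_linear_image)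

lemma Pair_components_in_span:
  fixes S :: "('a::real_vector \<times> 'b::real_vector) set"
  assumes "a\<^sup>2 + b\<^sup>2 = 1"
    and "(a *\<^sub>R g, b *\<^sub>R h) \<in> span S" and "(- (b *\<^sub>R g), a *\<^sub>R h) \<in> span S"
  shows "(g, 0) \<in> span S" and "(0, h) \<in> span S"
proof -
  have "((a\<^sup>2 + b\<^sup>2) *\<^sub>R g, 0) = a *\<^sub>R (a *\<^sub>R g, b *\<^sub>R h) - b *\<^sub>R (- (b *\<^sub>R g), a *\<^sub>R h)"
    by (simp add: algebra_simps power2_eq_square)
  also have "\<dots> \<in> span S"
    using assms(2,3) by (intro span_diff span_scale)
  finally show "(g, 0) \<in> span S"
    using assms(1) by simp
  have "(0, (a\<^sup>2 + b\<^sup>2) *\<^sub>R h) = b *\<^sub>R (a *\<^sub>R g, b *\<^sub>R h) + a *\<^sub>R (- (b *\<^sub>R g), a *\<^sub>R h)"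
    by (simp add: algebra_simps power2_eq_square)
  also have "\<dots> \<in> span S"
    using assms(2,3) by (intro span_add span_scale)
  finally show "(0, h) \<in> span S"
    using assms(1) by simp
qed

lemma independent_image_not_in_span_singleton:
  assumes "independent (f ` A)" and "inj_on f A" and "i \<in> A" and "j \<in> A" and "i \<noteq> j"
  shows "f i \<notin> span {f j}"
proof
  assume "f i \<in> span {f j}"
  moreover have "span {f j} \<subseteq> span (f ` A - {f i})"
    using assms(2-5) by (intro span_mono) (auto dest: inj_onD)
  ultimately show False
    using assms(1,3) dependent_def by blast
qed

lemma span_Yfield_subset_tangent:
  assumes "v \<bullet> v = 1"
  shows "span {Yfield \<gamma> k i x v | k i. k \<in> K \<and> i \<in> J} \<subseteq> UNIV \<times> {w. w \<bullet> v = 0}"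
proof (rule span_minimal)
  show "{Yfield \<gamma> k i x v | k i. k \<in> K \<and> i \<in> J} \<subseteq> UNIV \<times> {w. w \<bullet> v = 0}"
    using inner_Proj_self[OF assms] by (auto simp: Yfield_def)
qed (simp add: subspace_Times subspace_hyperplane2)

context
  fixes \<gamma> :: "int^('n::{finite,linorder}) \<Rightarrow> nat \<Rightarrow> real^('n::{finite,linorder})"
  assumes adm: "admissible_gamma \<gamma>"
begin

lemma admissible_gammaD:
  assumes "k \<in> Zzero" and "i \<in> {1..<CARD('n)}"
  shows "\<gamma> k i \<bullet> rvec k = 0" and "\<gamma> k i \<bullet> \<gamma> k i = 1" and "\<gamma> (- k) i = - \<gamma> k i"
    and "\<And>j. j \<in> {1..<CARD('n)} \<Longrightarrow> i \<noteq> j \<Longrightarrow> \<gamma> k i \<bullet> \<gamma> k j = 0"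
  using adm assms unfolding admissible_gamma_def dimof_def by auto

lemma span_gamma_eq_hyperplane:
  assumes "k \<in> Zzero"
  shows "span (\<gamma> k ` {1..<CARD('n)}) = {u. u \<bullet> rvec k = 0}"
proof (rule span_orthogonal_family_eq_hyperplane)
  show "rvec k \<noteq> 0"
    using assms by (simp add: Zzero_def rvec_eq_0_iff)
  have "inj_on (\<gamma> k) {1..<CARD('n)}"
    using admissible_gammaD[OF assms] by (intro inj_onI) (metis zero_neq_one)
  then show "card (\<gamma> k ` {1..<CARD('n)}) = DIM(real^('n::{finite,linorder})) - 1"
    by (simp add: card_image)
  show "pairwise orthogonal (\<gamma> k ` {1..<CARD('n)})"
    using admissible_gammaD(4)[OF assms] by (fastforce simp: pairwise_def orthogonal_def)
qed (use admissible_gammaD[OF assms] in force)+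

lemma Yfield_uminus:
  assumes "k \<in> Zzero" and "i \<in> {1..<CARD('n)}"
  shows "Yfield \<gamma> (- k) i x v
           = (- (ek (- k) x *\<^sub>R \<gamma> k i), ek k x *\<^sub>R ((rvec k \<bullet> v) *\<^sub>R Proj v (\<gamma> k i)))"
  using admissible_gammaD(3)[OF assms] by (simp add: Yfield_def rvec_uminus Proj_uminus)

lemma Yfield_components_in_span:
  fixes x v :: "real^('n::{finite,linorder})"
  assumes "K \<subseteq> Zzero" and "uminus ` K \<subseteq> K" and "k \<in> K" and "i \<in> {1..<CARD('n)}"
  defines "S \<equiv> {Yfield \<gamma> k' i' x v | k' i'. k' \<in> K \<and> i' \<in> {1..<CARD('n)}}"
  shows "(\<gamma> k i, 0) \<in> span S" and "(0, (rvec k \<bullet> v) *\<^sub>R Proj v (\<gamma> k i)) \<in> span S"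
proof -
  have "k \<in> Zzero"
    using assms(1,3) by blast
  have "Yfield \<gamma> k i x v \<in> span S" and "Yfield \<gamma> (- k) i x v \<in> span S"
    using assms(2-4) unfolding S_def by (blast intro: span_base)+
  moreover have "Yfield \<gamma> k i x v = (ek k x *\<^sub>R \<gamma> k i, ek (- k) x *\<^sub>R ((rvec k \<bullet> v) *\<^sub>R Proj v (\<gamma> k i)))"
    by (simp add: Yfield_def)
  moreover have "(ek k x)\<^sup>2 + (ek (- k) x)\<^sup>2 = 1"
    using \<open>k \<in> Zzero\<close> by (intro ek_power2_add_ek_uminus_power2) (simp add: Zzero_def)
  ultimately show "(\<gamma> k i, 0) \<in> span S" and "(0, (rvec k \<bullet> v) *\<^sub>R Proj v (\<gamma> k i)) \<in> span S"
    using Pair_components_in_span Yfield_uminus[OF \<open>k \<in> Zzero\<close> assms(4)] by metis+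
qed

lemma first_factor_in_span:
  assumes "k1 \<in> Zzero" and "k2 \<in> Zzero" and "rvec k1 \<notin> span {rvec k2}"
    and "\<forall>i\<in>{1..<CARD('n)}. (\<gamma> k1 i, 0) \<in> span S"
    and "\<forall>i\<in>{1..<CARD('n)}. (\<gamma> k2 i, 0) \<in> span S"
  shows "(w, 0) \<in> span S"
proof -
  let ?G = "\<gamma> k1 ` {1..<CARD('n)} \<union> \<gamma> k2 ` {1..<CARD('n)}"
  have "(\<lambda>g. (g, 0)) ` span ?G \<subseteq> span S"
    by (rule linear_image_span_subset[OF linearI]) (use assms(4,5) in auto)
  moreover have "span ?G = UNIV"
    by (rule span_Un_eq_UNIV_if_hyperplanes[OF assms(3)])
      (simp_all only: span_gamma_eq_hyperplane[OF assms(1)] span_gamma_eq_hyperplane[OF assms(2)] order_refl)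
  ultimately show ?thesis
    by auto
qed

lemma second_factor_in_span:
  assumes "k \<in> Zzero" and "v \<bullet> v = 1" and "rvec k \<bullet> v \<noteq> 0"
    and "\<forall>i\<in>{1..<CARD('n)}. (0, (rvec k \<bullet> v) *\<^sub>R Proj v (\<gamma> k i)) \<in> span S"
    and "w \<bullet> v = 0"
  shows "(0, w) \<in> span S"
proof -
  let ?t = "rvec k \<bullet> v"
  obtain g where "g \<bullet> rvec k = 0" and g_w: "Proj v g = w"
    using hyperplane_subset_Proj_image[OF assms(2,3)] assms(5) by blast
  have "(\<lambda>g. (0, ?t *\<^sub>R Proj v g)) ` span (\<gamma> k ` {1..<CARD('n)}) \<subseteq> span S"
    by (rule linear_image_span_subset[OF linearI])
      (use assms(4) in \<open>auto simp: linear_add[OF linear_Proj] linear_scale[OF linear_Proj] algebra_simps\<close>)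
  moreover have "g \<in> span (\<gamma> k ` {1..<CARD('n)})"
    using span_gamma_eq_hyperplane[OF assms(1)] \<open>g \<bullet> rvec k = 0\<close> by simp
  ultimately have "(0, ?t *\<^sub>R w) \<in> span S"
    using g_w by auto
  then have "(1 / ?t) *\<^sub>R (0, ?t *\<^sub>R w) \<in> span S"
    by (rule span_scale)
  then show ?thesis
    using assms(3) by simp
qed

end

theorem lemma5p3:
  fixes \<gamma> :: "int^('n::{finite,linorder}) \<Rightarrow> nat \<Rightarrow> real^('n::{finite,linorder})"
    and kv :: "nat \<Rightarrow> int^('n::{finite,linorder})"
    and x v :: "real^('n::{finite,linorder})"
  assumes "CARD('n::{finite,linorder}) = 2 \<or> CARD('n::{finite,linorder}) = 3"
    and "admissible_gamma \<gamma>"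
    and "\<forall>j\<in>{1..CARD('n::{finite,linorder})}. kv j \<in> Zzero"
    and "inj_on (\<lambda>j. rvec (kv j)) {1..CARD('n::{finite,linorder})}"
    and "independent ((\<lambda>j. rvec (kv j)) ` {1..CARD('n::{finite,linorder})})"
    and "norm v = 1"
  shows "span {Yfield \<gamma> k i x v | k i.
                k \<in> kv ` {1..CARD('n::{finite,linorder})} \<union> uminus ` kv ` {1..CARD('n::{finite,linorder})} \<and> i \<in> {1..<CARD('n::{finite,linorder})}}
         = UNIV \<times> {w. w \<bullet> v = 0}"
proof -
  define I where "I = {1..CARD('n)}"
  define K where "K = kv ` I \<union> uminus ` kv ` I"
  define S where "S = {Yfield \<gamma> k i x v | k i. k \<in> K \<and> i \<in> {1..<CARD('n)}}"
  have v_unit: "v \<bullet> v = 1"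
    using assms(6) by (simp add: norm_eq_1)
  have K: "K \<subseteq> Zzero" "uminus ` K \<subseteq> K"
    using assms(3) by (auto simp: K_def I_def Zzero_def)
  note components = Yfield_components_in_span[OF assms(2) K, where x = x and v = v, folded S_def]
  have "kv ` I \<subseteq> K"
    by (simp add: K_def)
  have "1 \<in> I" and "2 \<in> I"
    using assms(1) by (auto simp: I_def)
  then have "rvec (kv 1) \<notin> span {rvec (kv 2)}"
    using independent_image_not_in_span_singleton[OF assms(5,4), of 1 2] unfolding I_def by simp
  then have first: "(w, 0) \<in> span S" for w
    using components(1) K(1) \<open>kv ` I \<subseteq> K\<close> \<open>1 \<in> I\<close> \<open>2 \<in> I\<close>
    by (intro first_factor_in_span[OF assms(2)]) auto
  have "v \<noteq> 0"
    using assms(6) by auto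
  then have "\<exists>j\<in>I. rvec (kv j) \<bullet> v \<noteq> 0"
    unfolding I_def by (intro exists_inner_nonzero_if_independent_image[OF assms(5,4)]) simp_all
  then obtain j where "j \<in> I" and "rvec (kv j) \<bullet> v \<noteq> 0"
    by blast
  have second: "(0, w) \<in> span S" if "w \<bullet> v = 0" for w
    by (rule second_factor_in_span[OF assms(2) _ v_unit \<open>rvec (kv j) \<bullet> v \<noteq> 0\<close> _ that])
      (use components(2) K(1) \<open>kv ` I \<subseteq> K\<close> \<open>j \<in> I\<close> in auto)
  have "span S \<subseteq> UNIV \<times> {w. w \<bullet> v = 0}"
    unfolding S_def by (rule span_Yfield_subset_tangent[OF v_unit])
  moreover have "(w, u) \<in> span S" if "u \<bullet> v = 0" for w u
    using span_add[OF first second[OF that]] by simp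
  ultimately show ?thesis
    unfolding S_def K_def I_def by blast
qed

end
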